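(* Let $X$ be an $X$-set parameter and let $G$ be a graph with no isolated vertices. If there exists an automorphism $\varphi$ of $\mathscr{X}^{\rm TAR}(G)$ with $\varphi(V(G))\neq V(G)$, then $\mathscr{X}^{\rm TAR}(G)$ has a perfect matching.
   Context: All graphs are simple, finite, with nonempty vertex set. An $X$-set parameter is a graph parameter $X(G)$ defined as the minimum cardinality of an $X$-set of $G$, where the $X$-sets of each graph are subsets of its vertex set determined by some property satisfying: (1) supersets (within $V(G)$) of $X$-sets are $X$-sets; (2) the empty set is never an $X$-set; (3) an $X$-set of a disconnected graph is the union of an $X$-set of each component; (4) if $G$ has no isolated vertices, every set of $|V(G)|-1$ vertices is an $X$-set. The $X$-TAR graph $\mathscr{X}^{\rm TAR}(G)$ has as vertices all $X$-sets of $G$ (so $V(G)$ itself is a vertex), with $S_1,S_2$ adjacent iff $|S_1\ominus S_2|=1$ (symmetric difference). *)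

theory Defs
  imports Main
begin

definition graph :: "'a set \<Rightarrow> 'a set set \<Rightarrow> bool" where
  "graph V E \<longleftrightarrow> finite V \<and> V \<noteq> {} \<and> (\<forall>e\<in>E. e \<subseteq> V \<and> card e = 2)"

definition isolated :: "'a set \<Rightarrow> 'a set set \<Rightarrow> 'a \<Rightarrow> bool" where
  "isolated V E v \<longleftrightarrow> v \<in> V \<and> (\<forall>e\<in>E. v \<notin> e)"

definition no_isolated :: "'a set \<Rightarrow> 'a set set \<Rightarrow> bool" where
  "no_isolated V E \<longleftrightarrow> (\<forall>v\<in>V. \<not> isolated V E v)"

definition adj :: "'a set set \<Rightarrow> 'a \<Rightarrow> 'a \<Rightarrow> bool" where
  "adj E u v \<longleftrightarrow> {u, v} \<in> E"

definition component :: "'a set set \<Rightarrow> 'a \<Rightarrow> 'a set" where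
  "component E v = {u. (adj E)\<^sup>*\<^sup>* v u}"

definition components :: "'a set \<Rightarrow> 'a set set \<Rightarrow> 'a set set" where
  "components V E = component E ` V"

definition disconnected :: "'a set \<Rightarrow> 'a set set \<Rightarrow> bool" where
  "disconnected V E \<longleftrightarrow> (\<exists>u\<in>V. \<exists>v\<in>V. \<not> (adj E)\<^sup>*\<^sup>* u v)"

definition induced_edges :: "'a set set \<Rightarrow> 'a set \<Rightarrow> 'a set set" where
  "induced_edges E C = {e \<in> E. e \<subseteq> C}"

text \<open>An X-set property: assigns to every graph (V,E) on vertex type 'a its family
  of X-sets, satisfying the axioms (0) X-sets are subsets of V(G), (1)-(4) of the paper,
  and such that the parameter (minimum cardinality) is defined, i.e. X-sets exist.\<close>
definition Xset_property :: "('a set \<Rightarrow> 'a set set \<Rightarrow> 'a set set) \<Rightarrow> bool" where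
  "Xset_property X \<longleftrightarrow>
    (\<forall>V E. graph V E \<longrightarrow>
       (\<forall>S\<in>X V E. S \<subseteq> V)
     \<and> X V E \<noteq> {}
     \<and> (\<forall>S T. S \<in> X V E \<and> S \<subseteq> T \<and> T \<subseteq> V \<longrightarrow> T \<in> X V E)
     \<and> {} \<notin> X V E
     \<and> (disconnected V E \<longrightarrow>
          (\<forall>S. S \<in> X V E \<longleftrightarrow>
               S \<subseteq> V \<and> (\<forall>C\<in>components V E. S \<inter> C \<in> X C (induced_edges E C))))
     \<and> (no_isolated V E \<longrightarrow> (\<forall>v\<in>V. V - {v} \<in> X V E)))"

definition TAR_vertices :: "('a set \<Rightarrow> 'a set set \<Rightarrow> 'a set set) \<Rightarrow> 'a set \<Rightarrow> 'a set set \<Rightarrow> 'a set set" where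
  "TAR_vertices X V E = X V E"

definition TAR_edges :: "('a set \<Rightarrow> 'a set set \<Rightarrow> 'a set set) \<Rightarrow> 'a set \<Rightarrow> 'a set set \<Rightarrow> 'a set set set" where
  "TAR_edges X V E = {{S1, S2} | S1 S2. S1 \<in> X V E \<and> S2 \<in> X V E \<and>
                         card ((S1 - S2) \<union> (S2 - S1)) = 1}"

definition graph_automorphism :: "'b set \<Rightarrow> 'b set set \<Rightarrow> ('b \<Rightarrow> 'b) \<Rightarrow> bool" where
  "graph_automorphism V E f \<longleftrightarrow> bij_betw f V V \<and>
     (\<forall>u\<in>V. \<forall>v\<in>V. {u, v} \<in> E \<longleftrightarrow> {f u, f v} \<in> E)"

definition has_perfect_matching :: "'b set \<Rightarrow> 'b set set \<Rightarrow> bool" where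
  "has_perfect_matching V E \<longleftrightarrow> (\<exists>M. M \<subseteq> E \<and> (\<forall>v\<in>V. \<exists>!e. e \<in> M \<and> v \<in> e))"

end

theory Submission
  imports Defs
begin

text \<open>In the TAR graph of an upward closed family of subsets of a finite set, the graph distance
  between two members is the size of their symmetric difference, so every automorphism preserves
  it. Let \<open>\<phi>\<close> be an automorphism moving \<open>V\<close>, and pick \<open>x \<in> V - \<phi> V\<close>. The neighbour
  \<open>\<phi>\<^sup>-\<^sup>1 (\<phi> V \<union> {x})\<close> of \<open>V\<close> is \<open>V - {v}\<close>, and comparing distances to \<open>\<phi> V\<close> and \<open>\<phi> V \<union> {x}\<close>
  shows that \<open>x \<in> \<phi> U\<close> exactly when \<open>v \<notin> U\<close>. Hence for an X-set \<open>T\<close> containing \<open>x\<close>, the image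
  of \<open>\<phi>\<^sup>-\<^sup>1 T \<union> {v}\<close> is a neighbour of \<open>T\<close> avoiding \<open>x\<close>, i.e. \<open>T - {x}\<close> is an X-set. So toggling
  \<open>x\<close> is a fixed-point-free involution of the X-sets along edges, which is a perfect matching.\<close>

definition flip_edges :: "'a set set \<Rightarrow> 'a set set set" where
  "flip_edges F = {{A, B} | A B. A \<in> F \<and> B \<in> F \<and> card (sym_diff A B) = 1}"

definition upward_closed :: "'a set \<Rightarrow> 'a set set \<Rightarrow> bool" where
  "upward_closed V F \<longleftrightarrow> (\<forall>S\<in>F. S \<subseteq> V) \<and> (\<forall>S T. S \<in> F \<and> S \<subseteq> T \<and> T \<subseteq> V \<longrightarrow> T \<in> F)"

lemma upward_closedD:
  assumes "upward_closed V F"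
  shows upward_closed_subset: "S \<in> F \<Longrightarrow> S \<subseteq> V"
    and upward_closed_mono: "S \<in> F \<Longrightarrow> S \<subseteq> T \<Longrightarrow> T \<subseteq> V \<Longrightarrow> T \<in> F"
  using assms unfolding upward_closed_def by blast+

lemma upward_closed_insert: "upward_closed V F \<Longrightarrow> S \<in> F \<Longrightarrow> x \<in> V \<Longrightarrow> insert x S \<in> F"
  unfolding upward_closed_def by blast

lemma upward_closed_finite_sym_diff:
  "upward_closed V F \<Longrightarrow> finite V \<Longrightarrow> A \<in> F \<Longrightarrow> B \<in> F \<Longrightarrow> finite (sym_diff A B)"
  unfolding upward_closed_def by (meson finite_Un finite_Diff finite_subset)

lemma upward_closed_top: "upward_closed V F \<Longrightarrow> F \<noteq> {} \<Longrightarrow> V \<in> F"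
  unfolding upward_closed_def by blast

lemma Xset_property_upward_closed:
  assumes "Xset_property X" "graph V E"
  shows "upward_closed V (X V E)" and "X V E \<noteq> {}"
  using assms unfolding Xset_property_def upward_closed_def by blast+

lemma TAR_edges_eq_flip_edges: "TAR_edges X V E = flip_edges (X V E)"
  by (simp add: TAR_edges_def flip_edges_def)

lemma adj_flip_edges_iff:
  "adj (flip_edges F) A B \<longleftrightarrow> A \<in> F \<and> B \<in> F \<and> card (sym_diff A B) = 1"
proof
  assume "adj (flip_edges F) A B"
  then obtain S1 S2 where "{A, B} = {S1, S2}" "S1 \<in> F" "S2 \<in> F" "card (sym_diff S1 S2) = 1"
    by (auto simp: adj_def flip_edges_def)
  then show "A \<in> F \<and> B \<in> F \<and> card (sym_diff A B) = 1"
    by (auto simp: doubleton_eq_iff Un_commute)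
qed (auto simp: adj_def flip_edges_def)

lemma flip_edges_subset: "e \<in> flip_edges F \<Longrightarrow> e \<subseteq> F"
  by (auto simp: flip_edges_def)

lemma graph_automorphism_adj_relpowp_iff:
  assumes aut: "graph_automorphism V E f" and E: "\<forall>e\<in>E. e \<subseteq> V"
    and u: "u \<in> V" and w: "w \<in> V"
  shows "(adj E ^^ n) (f u) (f w) \<longleftrightarrow> (adj E ^^ n) u w"
  using w
proof (induction n arbitrary: w)
  case 0
  then show ?case
    using aut u by (auto simp: graph_automorphism_def bij_betw_def inj_on_def)
next
  case (Suc n)
  have adj_in_V: "z \<in> V" if "adj E z y" for z y
    using E that by (auto simp: adj_def)
  have adj_image: "adj E (f z) (f y) \<longleftrightarrow> adj E z y" if "z \<in> V" "y \<in> V" for z y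
    using aut that by (auto simp: graph_automorphism_def adj_def)
  have image: "f ` V = V"
    using aut by (simp add: graph_automorphism_def bij_betw_def)
  show ?case
  proof
    assume "(adj E ^^ Suc n) (f u) (f w)"
    then obtain z where uz: "(adj E ^^ n) (f u) z" and zw: "adj E z (f w)"
      by (rule relpowp_Suc_E)
    then obtain y where "y \<in> V" "z = f y"
      using adj_in_V image by blast
    then show "(adj E ^^ Suc n) u w"
      using Suc uz zw adj_image by (metis relpowp_Suc_I)
  next
    assume "(adj E ^^ Suc n) u w"
    then obtain y where uy: "(adj E ^^ n) u y" and yw: "adj E y w"
      by (rule relpowp_Suc_E)
    then show "(adj E ^^ Suc n) (f u) (f w)"
      using Suc adj_in_V adj_image by (metis relpowp_Suc_I)
  qed
qed

lemma flip_walk_card_sym_diff_le: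
  "(adj (flip_edges F) ^^ n) A B \<Longrightarrow> finite (sym_diff A B) \<and> card (sym_diff A B) \<le> n"
proof (induction n arbitrary: B)
  case 0
  then show ?case by simp
next
  case (Suc n)
  from Suc.prems obtain C where AC: "(adj (flip_edges F) ^^ n) A C" and "adj (flip_edges F) C B"
    by (rule relpowp_Suc_E)
  then have CB: "card (sym_diff C B) = 1"
    by (simp add: adj_flip_edges_iff)
  have fin: "finite (sym_diff A C)" "finite (sym_diff C B)"
    using Suc.IH[OF AC] CB card.infinite by (blast, metis zero_neq_one)
  have triangle: "sym_diff A B \<subseteq> sym_diff A C \<union> sym_diff C B"
    by blast
  then have "finite (sym_diff A B)"
    using fin by (meson finite_UnI finite_subset)
  have "card (sym_diff A B) \<le> card (sym_diff A C \<union> sym_diff C B)"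
    using triangle fin by (intro card_mono) simp_all
  also have "\<dots> \<le> card (sym_diff A C) + card (sym_diff C B)"
    by (rule card_Un_le)
  finally show ?case
    using Suc.IH[OF AC] CB \<open>finite (sym_diff A B)\<close> by simp
qed

lemma upward_closed_flip_walk:
  assumes up: "upward_closed V F" and "finite V" and A: "A \<in> F" and "B \<in> F"
  shows "(adj (flip_edges F) ^^ card (sym_diff A B)) A B"
  using \<open>B \<in> F\<close>
proof (induction "card (sym_diff A B)" arbitrary: B)
  case 0
  then have "A = B"
    using upward_closed_finite_sym_diff[OF up \<open>finite V\<close> A] by fastforce
  then show ?case
    by simp
next
  case (Suc k)
  then have "sym_diff A B \<noteq> {}"
    by (metis card.empty nat.distinct(1))
  \<comment> \<open>Adding an element of \<open>A - B\<close> to \<open>B\<close> stays in \<open>F\<close>; removing one of \<open>B - A\<close> is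
    only safe once \<open>A \<subseteq> B\<close>.\<close>
  then obtain y where y: "y \<in> sym_diff A B" and y_choice: "y \<in> B \<Longrightarrow> A \<subseteq> B"
    by blast
  define C where "C = sym_diff B {y}"
  have "A \<subseteq> C \<or> B \<subseteq> C" and "C \<subseteq> V"
    using y y_choice upward_closed_subset[OF up] A Suc.prems by (auto simp: C_def)
  then have C: "C \<in> F"
    using upward_closed_mono[OF up] A Suc.prems by blast
  have "sym_diff A C = sym_diff A B - {y}"
    using y by (auto simp: C_def)
  then have "k = card (sym_diff A C)"
    using Suc.hyps(2) y by (metis card_Diff_singleton_if card.infinite diff_Suc_1 nat.distinct(1))
  then have "(adj (flip_edges F) ^^ k) A C"
    using Suc.hyps(1) C by blast
  moreover have "sym_diff C B = {y}"
    using y by (auto simp: C_def)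
  then have "adj (flip_edges F) C B"
    using C Suc.prems by (simp add: adj_flip_edges_iff)
  ultimately show ?case
    using Suc.hyps(2) by (metis relpowp_Suc_I)
qed

lemma flip_automorphism_card_sym_diff:
  assumes up: "upward_closed V F" and fin: "finite V"
    and aut: "graph_automorphism F (flip_edges F) f" and A: "A \<in> F" and B: "B \<in> F"
  shows "card (sym_diff (f A) (f B)) = card (sym_diff A B)"
proof -
  have fA: "f A \<in> F" and fB: "f B \<in> F"
    using aut A B by (auto simp: graph_automorphism_def dest: bij_betwE)
  have walk_iff: "(adj (flip_edges F) ^^ n) (f A) (f B) \<longleftrightarrow> (adj (flip_edges F) ^^ n) A B" for n
    using graph_automorphism_adj_relpowp_iff[OF aut _ A B] flip_edges_subset by blast
  have "card (sym_diff (f A) (f B)) \<le> card (sym_diff A B)"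
    using flip_walk_card_sym_diff_le walk_iff upward_closed_flip_walk[OF up fin A B] by blast
  moreover have "card (sym_diff A B) \<le> card (sym_diff (f A) (f B))"
    using flip_walk_card_sym_diff_le walk_iff upward_closed_flip_walk[OF up fin fA fB] by blast
  ultimately show ?thesis
    by simp
qed

lemma card_sym_diff_insert_less_iff:
  assumes fin: "finite (sym_diff A B)" and "x \<notin> B"
  shows "card (sym_diff A (insert x B)) < card (sym_diff A B) \<longleftrightarrow> x \<in> A" (is ?shrinks)
    and "card (sym_diff A B) < card (sym_diff A (insert x B)) \<longleftrightarrow> x \<notin> A" (is ?grows)
proof -
  have "card (sym_diff A (insert x B)) < card (sym_diff A B)" if "x \<in> A"
  proof -
    have "sym_diff A (insert x B) = sym_diff A B - {x}" and "x \<in> sym_diff A B"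
      using that \<open>x \<notin> B\<close> by auto
    then show ?thesis
      using fin card_Diff1_less by metis
  qed
  moreover have "card (sym_diff A B) < card (sym_diff A (insert x B))" if "x \<notin> A"
  proof -
    have "sym_diff A (insert x B) = insert x (sym_diff A B)" and "x \<notin> sym_diff A B"
      using that \<open>x \<notin> B\<close> by auto
    then show ?thesis
      using fin by simp
  qed
  ultimately show ?shrinks ?grows
    by (meson less_asym)+
qed

lemma flip_automorphism_membership:
  assumes up: "upward_closed V F" and fin: "finite V" and V: "V \<in> F"
    and aut: "graph_automorphism F (flip_edges F) f" and x: "x \<in> V" "x \<notin> f V"
  shows "\<exists>v\<in>V. \<forall>U\<in>F. x \<in> f U \<longleftrightarrow> v \<notin> U"
proof -
  have image: "f ` F = F"
    using aut by (simp add: graph_automorphism_def bij_betw_def)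
  define S where "S = f V"
  have S: "S \<in> F"
    using image V by (auto simp: S_def)
  then have Sx: "insert x S \<in> F"
    using upward_closed_insert[OF up] x by blast
  then obtain W where W: "W \<in> F" "f W = insert x S"
    using image by (metis imageE)
  have "card (sym_diff W V) = card (sym_diff (insert x S) S)"
    using flip_automorphism_card_sym_diff[OF up fin aut W(1) V] W(2) by (simp add: S_def)
  also have "sym_diff (insert x S) S = {x}"
    using x by (auto simp: S_def)
  finally obtain v where "sym_diff W V = {v}"
    by (auto simp: card_Suc_eq)
  then have v: "v \<in> V" "v \<notin> W" "V = insert v W"
    using upward_closed_subset[OF up W(1)] by blast+
  have "x \<in> f U \<longleftrightarrow> v \<notin> U" if U: "U \<in> F" for U
  proof -
    have fU: "f U \<in> F"
      using U image by blast
    have "x \<in> f U \<longleftrightarrow> card (sym_diff (f U) (f W)) < card (sym_diff (f U) (f V))"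
      using card_sym_diff_insert_less_iff(1)[OF upward_closed_finite_sym_diff[OF up fin fU S]] x W(2) by (simp add: S_def)
    also have "\<dots> \<longleftrightarrow> card (sym_diff U W) < card (sym_diff U V)"
      using flip_automorphism_card_sym_diff[OF up fin aut U] W(1) V by simp
    also have "\<dots> \<longleftrightarrow> v \<notin> U"
      using card_sym_diff_insert_less_iff(2)[OF upward_closed_finite_sym_diff[OF up fin U W(1)] v(2)] v(3) by simp
    finally show ?thesis .
  qed
  then show ?thesis
    using v(1) by blast
qed

lemma sym_diff_eq_singleton_imp_Diff:
  assumes "sym_diff S T = {x}" and "x \<in> T"
  shows "S = T - {x}"
proof (rule set_eqI)
  fix z
  have "z \<in> sym_diff S T \<longleftrightarrow> z = x"
    using assms(1) by simp
  then show "z \<in> S \<longleftrightarrow> z \<in> T - {x}"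
    using assms(2) by blast
qed

lemma flip_automorphism_deletable:
  assumes up: "upward_closed V F" and fin: "finite V" and V: "V \<in> F"
    and aut: "graph_automorphism F (flip_edges F) f" and moved: "f V \<noteq> V"
  shows "\<exists>x\<in>V. \<forall>T\<in>F. x \<in> T \<longrightarrow> T - {x} \<in> F"
proof -
  have image: "f ` F = F"
    using aut by (simp add: graph_automorphism_def bij_betw_def)
  have "f V \<in> F"
    using V image by blast
  then obtain x where x: "x \<in> V" "x \<notin> f V"
    using moved upward_closed_subset[OF up] by blast
  then obtain v where v: "v \<in> V" and x_iff: "\<And>U. U \<in> F \<Longrightarrow> x \<in> f U \<longleftrightarrow> v \<notin> U"
    using flip_automorphism_membership[OF up fin V aut] by blast
  have "T - {x} \<in> F" if T: "T \<in> F" "x \<in> T" for T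
  proof -
    obtain U where U: "U \<in> F" "f U = T"
      using image T(1) by (metis imageE)
    have Uv: "insert v U \<in> F"
      using upward_closed_insert[OF up U(1) v] .
    have "v \<notin> U"
      using x_iff[OF U(1)] U(2) T(2) by simp
    then have "sym_diff (insert v U) U = {v}"
      by blast
    then have "card (sym_diff (f (insert v U)) T) = 1"
      using flip_automorphism_card_sym_diff[OF up fin aut Uv U(1)] U(2) by simp
    moreover have "x \<notin> f (insert v U)"
      using x_iff[OF Uv] by simp
    then have "x \<in> sym_diff (f (insert v U)) T"
      using T(2) by simp
    ultimately have "sym_diff (f (insert v U)) T = {x}"
      by (metis card_1_singletonE singletonD)
    then have "f (insert v U) = T - {x}"
      using T(2) by (rule sym_diff_eq_singleton_imp_Diff)
    moreover have "f (insert v U) \<in> F"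
      using image Uv by blast
    ultimately show ?thesis
      by simp
  qed
  then show ?thesis
    using x(1) by blast
qed

lemma involution_perfect_matching:
  assumes "\<forall>v\<in>V. g (g v) = v \<and> {v, g v} \<in> E"
  shows "has_perfect_matching V E"
  unfolding has_perfect_matching_def
proof (intro exI conjI ballI)
  let ?M = "{{v, g v} | v. v \<in> V}"
  show "?M \<subseteq> E"
    using assms by blast
  fix v assume v: "v \<in> V"
  show "\<exists>!e. e \<in> ?M \<and> v \<in> e"
  proof (rule ex1I)
    show "{v, g v} \<in> ?M \<and> v \<in> {v, g v}"
      using v by blast
  next
    fix e assume "e \<in> ?M \<and> v \<in> e"
    then obtain u where "u \<in> V" "e = {u, g u}" "v = u \<or> v = g u"
      by blast
    then show "e = {v, g v}"
      using assms by auto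
  qed
qed

lemma flip_edges_toggle_perfect_matching:
  assumes up: "upward_closed V F" and x: "x \<in> V"
    and deletable: "\<forall>T\<in>F. x \<in> T \<longrightarrow> T - {x} \<in> F"
  shows "has_perfect_matching F (flip_edges F)"
proof (rule involution_perfect_matching[where g = "\<lambda>T. sym_diff T {x}"], intro ballI conjI)
  fix T assume T: "T \<in> F"
  show "sym_diff (sym_diff T {x}) {x} = T"
    by blast
  have "sym_diff T {x} \<in> F"
  proof (cases "x \<in> T")
    case True
    then have "sym_diff T {x} = T - {x}"
      by blast
    then show ?thesis
      using deletable T True by simp
  next
    case False
    then have "sym_diff T {x} = insert x T"
      by blast
    then show ?thesis
      using upward_closed_insert[OF up T x] by simp
  qed
  moreover have "sym_diff T (sym_diff T {x}) = {x}"
    by blast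
  ultimately show "{T, sym_diff T {x}} \<in> flip_edges F"
    using T adj_flip_edges_iff[of F T "sym_diff T {x}"] by (simp add: adj_def)
qed

theorem proposition2p17:
  fixes X :: "'a set \<Rightarrow> 'a set set \<Rightarrow> 'a set set"
    and V :: "'a set" and E :: "'a set set"
    and \<phi> :: "'a set \<Rightarrow> 'a set"
  assumes "Xset_property X"
    and "graph V E"
    and "no_isolated V E"
    and "graph_automorphism (TAR_vertices X V E) (TAR_edges X V E) \<phi>"
    and "\<phi> V \<noteq> V"
  shows "has_perfect_matching (TAR_vertices X V E) (TAR_edges X V E)"
proof -
  have fin: "finite V"
    using assms(2) by (simp add: graph_def)
  have up: "upward_closed V (X V E)" and V: "V \<in> X V E"
    using Xset_property_upward_closed[OF assms(1,2)] upward_closed_top by blast+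
  have aut: "graph_automorphism (X V E) (flip_edges (X V E)) \<phi>"
    using assms(4) by (simp add: TAR_vertices_def TAR_edges_eq_flip_edges)
  obtain x where "x \<in> V" "\<forall>T\<in>X V E. x \<in> T \<longrightarrow> T - {x} \<in> X V E"
    using flip_automorphism_deletable[OF up fin V aut assms(5)] by blast
  then show ?thesis
    using flip_edges_toggle_perfect_matching[OF up] by (simp add: TAR_vertices_def TAR_edges_eq_flip_edges)
qed

end
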